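(* Let $A\in\mathbb{R}^{n\times n}$, $V=\{v_1,\ldots,v_n\}$, $T>0$ and $\epsilon>0$. For $S\subset V$ let $B(S)=\mathrm{diag}(\mathbf{1}(S))$, let $W_T(S)=\int_0^T e^{A\tau}B(S)B(S)^\top e^{A^\top\tau}\,d\tau$, and let $F(S)=\mathrm{tr}\big((W_T(S)+\epsilon I)^{-1}\big)$. Then $F$ is strictly decreasing: for all $S_1\subsetneqq S_2\subset V$, $F(S_2)<F(S_1)$.
   Context: $\mathbf{1}(S)\in\mathbb{R}^n$ is the vector whose $i$th entry is $1$ if $v_i\in S$ and $0$ otherwise, so $B(S)$ is the diagonal $0/1$ matrix selecting the coordinates indexed by $S$; this corresponds to the control system $\dot x=Ax+B(S)u$. $W_T(S)$ is its controllability Gramian on $[0,T]$. *)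

theory Defs
  imports "HOL-Analysis.Analysis"
begin

fun mat_pow :: "real^'n^'n \<Rightarrow> nat \<Rightarrow> real^'n^'n" where
  "mat_pow M 0 = mat 1"
| "mat_pow M (Suc k) = M ** mat_pow M k"

definition mat_exp :: "real^'n^'n \<Rightarrow> real^'n^'n" where
  "mat_exp M = (\<Sum>k. (1 / fact k) *\<^sub>R mat_pow M k)"

definition sel_mat :: "'n set \<Rightarrow> real^'n^'n" where
  "sel_mat S = (\<chi> i j. if i = j \<and> i \<in> S then 1 else 0)"

definition gramian :: "real^'n^'n \<Rightarrow> real \<Rightarrow> 'n set \<Rightarrow> real^'n^'n" where
  "gramian A T S = integral {0..T}
     (\<lambda>\<tau>. mat_exp (\<tau> *\<^sub>R A) ** sel_mat S ** transpose (sel_mat S) ** mat_exp (\<tau> *\<^sub>R transpose A))"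

definition Fobj :: "real^'n^'n \<Rightarrow> real \<Rightarrow> real \<Rightarrow> 'n set \<Rightarrow> real" where
  "Fobj A T \<epsilon> S = trace (matrix_inv (gramian A T S + \<epsilon> *\<^sub>R mat 1))"

end

theory Submission
  imports Defs
begin

(*
  The quadratic form of the Gramian is x' W_T(S) x = int_0^T sum_{k in S} ((exp(tau A') x)_k)^2 dtau.
  Hence W_T(S2) - W_T(S1) is positive semidefinite, and since exp(0) = I and the integrand is
  continuous, it is positive on every x with x_j ~= 0 for a fixed j in S2 - S1.
  For positive definite M1 <= M2 the diagonal entry e_i' M1^-1 e_i is the maximum of
  2 e_i' y - y' M1 y; taking y = M2^-1 e_i bounds it below by e_i' M2^-1 e_i + y' (M2 - M1) y.
  Summing over i gives tr M2^-1 <= tr M1^-1, strictly because some column of M2^-1 has a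
  nonzero j-th entry.
*)

lemma matrix_add_rdistrib: "((A::real^'n^'m) + B) ** C = A ** C + B ** C"
  by (simp add: matrix_matrix_mult_def vec_eq_iff distrib_right sum.distrib)

lemma bounded_bilinear_matrix_mult:
  "bounded_bilinear ((**) :: real^'n^'m \<Rightarrow> real^'p^'n \<Rightarrow> real^'p^'m)"
  unfolding bilinear_conv_bounded_bilinear[symmetric] bilinear_def
  by (auto intro!: linearI simp: matrix_add_ldistrib matrix_add_rdistrib matrix_scalar_ac scalar_matrix_assoc)

lemma mat_pow_norm_bound:
  obtains K :: real where "K > 0"
    and "\<And>(M::real^'n^'n) k. norm (mat_pow M k) \<le> norm (mat 1 :: real^'n^'n) * (K * norm M) ^ k"
proof -
  obtain K where K: "K > 0" "\<And>(X::real^'n^'n) (Y::real^'n^'n). norm (X ** Y) \<le> norm X * norm Y * K"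
    using bounded_bilinear.pos_bounded[OF bounded_bilinear_matrix_mult] by blast
  have "norm (mat_pow M k) \<le> norm (mat 1 :: real^'n^'n) * (K * norm M) ^ k" for M :: "real^'n^'n" and k
  proof (induction k)
    case (Suc k)
    have "norm (mat_pow M (Suc k)) \<le> K * norm M * norm (mat_pow M k)"
      using K(2)[of M "mat_pow M k"] by (simp add: ac_simps)
    also have "\<dots> \<le> K * norm M * (norm (mat 1 :: real^'n^'n) * (K * norm M) ^ k)"
      using Suc.IH \<open>K > 0\<close> by (intro mult_left_mono) auto
    finally show ?case by (simp add: ac_simps)
  qed simp
  with K(1) that show ?thesis by blast
qed

lemma mat_exp_series_norm_bound:
  obtains K :: real where "K > 0"
    and "\<And>(M::real^'n^'n) k. norm ((1 / fact k) *\<^sub>R mat_pow M k)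
           \<le> norm (mat 1 :: real^'n^'n) * ((K * norm M) ^ k / fact k)"
proof -
  obtain K where "K > 0"
    and K: "\<And>(M::real^'n^'n) k. norm (mat_pow M k) \<le> norm (mat 1 :: real^'n^'n) * (K * norm M) ^ k"
    using mat_pow_norm_bound by blast
  have "norm ((1 / fact k) *\<^sub>R mat_pow M k) \<le> norm (mat 1 :: real^'n^'n) * ((K * norm M) ^ k / fact k)"
    for M :: "real^'n^'n" and k
    using divide_right_mono[OF K[of M k], of "fact k"] by (simp add: divide_inverse ac_simps)
  with \<open>K > 0\<close> that show ?thesis by blast
qed

lemma summable_power_div_fact: "summable (\<lambda>k. (x::real) ^ k / fact k)"
  using summable_exp[of x] by (simp add: divide_inverse mult.commute)

lemma summable_mat_exp_series: "summable (\<lambda>k. (1 / fact k) *\<^sub>R mat_pow (M::real^'n^'n) k)"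
proof -
  obtain K where "\<And>k. norm ((1 / fact k) *\<^sub>R mat_pow M k)
      \<le> norm (mat 1 :: real^'n^'n) * ((K * norm M) ^ k / fact k)"
    using mat_exp_series_norm_bound by metis
  then show ?thesis
    by (rule summable_comparison_test'[OF summable_mult[OF summable_power_div_fact]])
qed

lemma mat_pow_scaleR: "mat_pow (c *\<^sub>R M) k = c ^ k *\<^sub>R mat_pow M k"
  by (induction k) (simp_all add: matrix_scalar_ac scalar_matrix_assoc mult.commute)

lemma mat_pow_commute: "mat_pow M k ** M = M ** mat_pow M k"
  by (induction k) (simp_all, metis matrix_mul_assoc)

lemma transpose_mat_pow: "transpose (mat_pow M k) = mat_pow (transpose M) k"
  by (induction k) (simp_all add: matrix_transpose_mul mat_pow_commute)

lemma bounded_linear_transpose: "bounded_linear (transpose :: real^'n^'m \<Rightarrow> real^'m^'n)"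
  unfolding linear_conv_bounded_linear[symmetric]
  by (rule linearI) (simp_all add: transpose_def vec_eq_iff)

lemma transpose_mat_exp: "transpose (mat_exp M) = mat_exp (transpose (M::real^'n^'n))"
  unfolding mat_exp_def
  by (subst bounded_linear.suminf[OF bounded_linear_transpose summable_mat_exp_series])
     (simp add: transpose_scalar transpose_mat_pow)

lemma mat_exp_zero: "mat_exp (0::real^'n^'n) = mat 1"
  unfolding mat_exp_def
proof (subst suminf_finite[of "{0}"])
  fix k :: nat
  assume "k \<notin> {0}"
  then obtain m where "k = Suc m" by (cases k) auto
  then show "(1 / fact k) *\<^sub>R mat_pow (0::real^'n^'n) k = 0" by simp
qed auto

text \<open>The exponential series converges uniformly on \<open>{0..T}\<close> by the Weierstrass M-test.\<close>
lemma continuous_on_mat_exp_scaleR: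
  "continuous_on {0..T} (\<lambda>\<tau>::real. mat_exp (\<tau> *\<^sub>R (M::real^'n^'n)))"
proof -
  obtain K where "K > 0" and K: "\<And>(M::real^'n^'n) k. norm ((1 / fact k) *\<^sub>R mat_pow M k)
      \<le> norm (mat 1 :: real^'n^'n) * ((K * norm M) ^ k / fact k)"
    using mat_exp_series_norm_bound by blast
  define f where "f = (\<lambda>k (\<tau>::real). (1 / fact k) *\<^sub>R mat_pow (\<tau> *\<^sub>R M) k)"
  have uniform: "uniform_limit {0..T} (\<lambda>n \<tau>. \<Sum>k<n. f k \<tau>) (\<lambda>\<tau>. \<Sum>k. f k \<tau>) sequentially"
  proof (rule Weierstrass_m_test)
    fix k and \<tau> :: real
    assume \<tau>: "\<tau> \<in> {0..T}"
    have "(K * norm (\<tau> *\<^sub>R M)) ^ k \<le> (K * (T * norm M)) ^ k"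
      using \<tau> \<open>K > 0\<close> by (intro power_mono mult_left_mono mult_right_mono) (auto intro: mult_right_mono)
    then show "norm (f k \<tau>) \<le> norm (mat 1 :: real^'n^'n) * ((K * (T * norm M)) ^ k / fact k)"
      unfolding f_def
      by (rule order.trans[OF K mult_left_mono[OF divide_right_mono]]) auto
  qed (intro summable_mult summable_power_div_fact)
  have "continuous_on {0..T} (\<lambda>\<tau>. \<Sum>k. f k \<tau>)"
  proof (rule uniform_limit_theorem[OF _ uniform])
    show "\<forall>\<^sub>F n in sequentially. continuous_on {0..T} (\<lambda>\<tau>. \<Sum>k<n. f k \<tau>)"
      unfolding f_def mat_pow_scaleR by (intro always_eventually allI continuous_intros)
  qed simp
  then show ?thesis unfolding f_def mat_exp_def .
qed

lemma bounded_bilinear_matrix_vector_mult: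
  "bounded_bilinear ((*v) :: real^'n^'m \<Rightarrow> real^'n \<Rightarrow> real^'m)"
  unfolding bilinear_conv_bounded_bilinear[symmetric] bilinear_def
  by (auto intro!: linearI simp: matrix_vector_right_distrib matrix_vector_mult_add_rdistrib
      scaleR_matrix_vector_assoc matrix_vector_mult_scaleR)

lemma continuous_on_mat_exp_scaleR_apply:
  "continuous_on {0..T} (\<lambda>\<tau>. (mat_exp (\<tau> *\<^sub>R (M::real^'n^'n)) *v x) $ k)"
  by (intro continuous_on_component bounded_bilinear.continuous_on[OF bounded_bilinear_matrix_vector_mult]
      continuous_on_mat_exp_scaleR continuous_on_const)

lemma inner_matrix_mult_transpose:
  "x \<bullet> ((C ** transpose C) *v y) = (transpose C *v x) \<bullet> (transpose C *v (y::real^'n))"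
proof -
  have "x \<bullet> ((C ** transpose C) *v y) = x \<bullet> (C *v (transpose C *v y))"
    by (simp only: matrix_vector_mul_assoc)
  also have "\<dots> = (x v* C) \<bullet> (transpose C *v y)"
    by (simp only: dot_lmul_matrix)
  also have "\<dots> = (transpose C *v x) \<bullet> (transpose C *v y)"
    by (simp only: transpose_matrix_vector)
  finally show ?thesis .
qed

lemma transpose_sel_mat: "transpose (sel_mat S) = sel_mat S"
  unfolding transpose_def sel_mat_def by (auto simp: vec_eq_iff)

lemma inner_sel_mat:
  fixes u v :: "real^'n"
  shows "(sel_mat S *v u) \<bullet> (sel_mat S *v v) = (\<Sum>k\<in>S. u $ k * v $ k)"
proof -
  have sel: "(sel_mat S *v w) $ k = (if k \<in> S then w $ k else 0)" for w :: "real^'n" and k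
    by (simp add: matrix_vector_mult_def sel_mat_def if_distrib[where f="\<lambda>c. c * _"] cong: if_cong)
  show ?thesis
    by (simp add: inner_vec_def sel if_distrib sum.If_cases cong: if_cong)
qed

lemma inner_gramian:
  fixes A :: "real^'n^'n"
  shows "x \<bullet> (gramian A T S *v y) = integral {0..T}
    (\<lambda>\<tau>. \<Sum>k\<in>S. (mat_exp (\<tau> *\<^sub>R transpose A) *v x) $ k * (mat_exp (\<tau> *\<^sub>R transpose A) *v y) $ k)"
proof -
  define C where "C = (\<lambda>\<tau>. mat_exp (\<tau> *\<^sub>R A) ** sel_mat S)"
  have integrand: "mat_exp (\<tau> *\<^sub>R A) ** sel_mat S ** transpose (sel_mat S) ** mat_exp (\<tau> *\<^sub>R transpose A)
      = C \<tau> ** transpose (C \<tau>)" for \<tau>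
    by (simp add: C_def matrix_transpose_mul transpose_mat_exp transpose_scalar matrix_mul_assoc)
  have transpose_C: "transpose (C \<tau>) = sel_mat S ** mat_exp (\<tau> *\<^sub>R transpose A)" for \<tau>
    by (simp add: C_def matrix_transpose_mul transpose_mat_exp transpose_scalar transpose_sel_mat)
  have "continuous_on {0..T} (\<lambda>\<tau>. C \<tau> ** transpose (C \<tau>))"
    unfolding transpose_C unfolding C_def
    by (intro bounded_bilinear.continuous_on[OF bounded_bilinear_matrix_mult]
        continuous_on_mat_exp_scaleR continuous_on_const)
  then have "(\<lambda>\<tau>. C \<tau> ** transpose (C \<tau>)) integrable_on {0..T}"
    by (rule integrable_continuous_interval)
  moreover have "bounded_linear (\<lambda>M::real^'n^'n. x \<bullet> (M *v y))"
    by (intro bounded_linear_compose[OF bounded_linear_inner_right]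
        bounded_bilinear.bounded_linear_left[OF bounded_bilinear_matrix_vector_mult])
  ultimately have "x \<bullet> (gramian A T S *v y) = integral {0..T} (\<lambda>\<tau>. x \<bullet> ((C \<tau> ** transpose (C \<tau>)) *v y))"
    unfolding gramian_def integrand by (auto dest: integral_linear simp: o_def)
  also have "\<dots> = integral {0..T} (\<lambda>\<tau>. (transpose (C \<tau>) *v x) \<bullet> (transpose (C \<tau>) *v y))"
    by (simp only: inner_matrix_mult_transpose)
  finally show ?thesis
    unfolding transpose_C matrix_vector_mul_assoc[symmetric] inner_sel_mat .
qed

lemma integrable_on_sum_mat_exp_products:
  "(\<lambda>\<tau>. \<Sum>k\<in>S. (mat_exp (\<tau> *\<^sub>R (M::real^'n^'n)) *v x) $ k * (mat_exp (\<tau> *\<^sub>R M) *v y) $ k)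
     integrable_on {0..T}"
  by (intro integrable_continuous_interval continuous_intros continuous_on_mat_exp_scaleR_apply)

lemma inner_gramian_nonneg: "0 \<le> x \<bullet> (gramian A T S *v x)"
  unfolding inner_gramian
  by (intro integral_nonneg integrable_on_sum_mat_exp_products) (auto intro: sum_nonneg)

lemma inner_gramian_diff:
  fixes A :: "real^'n^'n"
  assumes "S1 \<subseteq> S2"
  shows "x \<bullet> ((gramian A T S2 - gramian A T S1) *v x) = integral {0..T}
    (\<lambda>\<tau>. \<Sum>k\<in>S2 - S1. ((mat_exp (\<tau> *\<^sub>R transpose A) *v x) $ k)\<^sup>2)"
proof -
  define u where "u = (\<lambda>\<tau>. mat_exp (\<tau> *\<^sub>R transpose A) *v x)"
  have "x \<bullet> ((gramian A T S2 - gramian A T S1) *v x)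
      = x \<bullet> (gramian A T S2 *v x) - x \<bullet> (gramian A T S1 *v x)"
    by (simp add: matrix_vector_mult_diff_rdistrib inner_diff_right)
  also have "\<dots> = integral {0..T} (\<lambda>\<tau>. (\<Sum>k\<in>S2. u \<tau> $ k * u \<tau> $ k) - (\<Sum>k\<in>S1. u \<tau> $ k * u \<tau> $ k))"
    unfolding inner_gramian u_def
    by (intro integral_diff[symmetric] integrable_on_sum_mat_exp_products)
  also have "\<dots> = integral {0..T} (\<lambda>\<tau>. \<Sum>k\<in>S2 - S1. (u \<tau> $ k)\<^sup>2)"
    using assms by (simp add: sum_diff power2_eq_square)
  finally show ?thesis unfolding u_def .
qed

lemma inner_gramian_diff_nonneg:
  assumes "S1 \<subseteq> S2"
  shows "0 \<le> x \<bullet> ((gramian A T S2 - gramian A T S1) *v x)"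
  unfolding inner_gramian_diff[OF assms]
  by (intro integral_nonneg integrable_continuous_interval continuous_intros
      continuous_on_mat_exp_scaleR_apply) (auto intro: sum_nonneg)

lemma integral_pos_if_continuous_nonneg:
  fixes g :: "real \<Rightarrow> real"
  assumes "a < b" and "continuous_on {a..b} g" and "\<And>t. t \<in> {a..b} \<Longrightarrow> 0 \<le> g t"
    and "c \<in> {a..b}" and "g c \<noteq> 0"
  shows "0 < integral {a..b} g"
proof -
  have g: "g integrable_on {a..b}"
    using assms(2) by (rule integrable_continuous_interval)
  have "integral {a..b} g \<noteq> 0"
  proof
    assume "integral {a..b} g = 0"
    then have "(g has_integral 0) (cbox a b)"
      using g by (simp add: has_integral_integral)
    then have "g c = 0"
      by (rule has_integral_0_cbox_imp_0[rotated 2]) (use assms in auto)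
    with \<open>g c \<noteq> 0\<close> show False ..
  qed
  moreover have "0 \<le> integral {a..b} g"
    using g assms(3) by (rule integral_nonneg)
  ultimately show ?thesis by simp
qed

lemma inner_gramian_diff_pos:
  fixes A :: "real^'n^'n"
  assumes "T > 0" and "S1 \<subseteq> S2" and "j \<in> S2 - S1" and "x $ j \<noteq> 0"
  shows "0 < x \<bullet> ((gramian A T S2 - gramian A T S1) *v x)"
proof -
  define u where "u = (\<lambda>\<tau>. mat_exp (\<tau> *\<^sub>R transpose A) *v x)"
  have cont: "continuous_on {0..T} (\<lambda>\<tau>. (u \<tau> $ k)\<^sup>2)" for k
    unfolding u_def by (intro continuous_intros continuous_on_mat_exp_scaleR_apply)
  have "0 < integral {0..T} (\<lambda>\<tau>. (u \<tau> $ j)\<^sup>2)"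
    using assms by (intro integral_pos_if_continuous_nonneg[OF _ cont, of _ 0])
      (simp_all add: u_def mat_exp_zero)
  also have "\<dots> \<le> integral {0..T} (\<lambda>\<tau>. \<Sum>k\<in>S2 - S1. (u \<tau> $ k)\<^sup>2)"
    using assms(3)
    by (intro integral_le integrable_continuous_interval continuous_on_sum cont member_le_sum) auto
  finally show ?thesis
    unfolding inner_gramian_diff[OF assms(2)] u_def .
qed

lemma matrix_inv_if_pos_definite:
  fixes M :: "real^'n^'n"
  assumes "\<And>x. x \<noteq> 0 \<Longrightarrow> 0 < x \<bullet> (M *v x)"
  shows "M ** matrix_inv M = mat 1" and "matrix_inv M ** M = mat 1"
proof -
  have "\<forall>x. M *v x = 0 \<longrightarrow> x = 0"
    using assms by (metis inner_zero_right less_irrefl)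
  then obtain B where B: "B ** M = mat 1"
    using matrix_left_invertible_ker by blast
  then have "M ** B = mat 1"
    using matrix_left_right_inverse by blast
  with B have "\<exists>B. M ** B = mat 1 \<and> B ** M = mat 1" by blast
  then show "M ** matrix_inv M = mat 1" and "matrix_inv M ** M = mat 1"
    unfolding matrix_inv_def by (metis (mono_tags, lifting) someI_ex)+
qed

lemma quadratic_form_le_inverse:
  fixes M :: "real^'n^'n"
  assumes sym: "\<And>x y. x \<bullet> (M *v y) = y \<bullet> (M *v x)"
    and psd: "\<And>x. 0 \<le> x \<bullet> (M *v x)"
    and "M *v z = e"
  shows "2 * (e \<bullet> y) - y \<bullet> (M *v y) \<le> e \<bullet> z"
proof -
  have "0 \<le> (y - z) \<bullet> (M *v (y - z))"
    by (rule psd)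
  also have "\<dots> = y \<bullet> (M *v y) - 2 * (y \<bullet> (M *v z)) + z \<bullet> (M *v z)"
    using sym[of z y] by (simp add: matrix_vector_mult_diff_distrib inner_diff_left inner_diff_right)
  finally show ?thesis
    using \<open>M *v z = e\<close> by (simp add: inner_commute)
qed

lemma trace_matrix_inv_strict_antimono:
  fixes M1 M2 :: "real^'n^'n"
  assumes sym1: "\<And>x y. x \<bullet> (M1 *v y) = y \<bullet> (M1 *v x)"
    and pd1: "\<And>x. x \<noteq> 0 \<Longrightarrow> 0 < x \<bullet> (M1 *v x)"
    and pd2: "\<And>x. x \<noteq> 0 \<Longrightarrow> 0 < x \<bullet> (M2 *v x)"
    and psd: "\<And>x. 0 \<le> x \<bullet> ((M2 - M1) *v x)"
    and pos: "\<And>x. x $ j \<noteq> 0 \<Longrightarrow> 0 < x \<bullet> ((M2 - M1) *v x)"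
  shows "trace (matrix_inv M2) < trace (matrix_inv M1)"
proof -
  define e where "e = (\<lambda>i. axis i (1::real) :: real^'n)"
  define y where "y = (\<lambda>i. matrix_inv M2 *v e i)"
  define z where "z = (\<lambda>i. matrix_inv M1 *v e i)"
  define D where "D = (\<lambda>i. y i \<bullet> ((M2 - M1) *v y i))"
  have trace_eq: "trace N = (\<Sum>i\<in>UNIV. e i \<bullet> (N *v e i))" for N :: "real^'n^'n"
    by (simp add: trace_def e_def inner_axis' matrix_vector_mult_basis column_def)
  have psd1: "0 \<le> x \<bullet> (M1 *v x)" for x
    using pd1[of x] by (cases "x = 0") auto
  have column_le: "e i \<bullet> y i + D i \<le> e i \<bullet> z i" for i
  proof -
    have "M2 *v y i = e i" "M1 *v z i = e i"
      by (simp_all add: y_def z_def matrix_vector_mul_assoc matrix_inv_if_pos_definite pd1 pd2)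
    then have "e i \<bullet> y i = y i \<bullet> (M1 *v y i) + D i"
      by (simp add: D_def matrix_vector_mult_diff_rdistrib inner_diff_right inner_commute)
    moreover have "2 * (e i \<bullet> y i) - y i \<bullet> (M1 *v y i) \<le> e i \<bullet> z i"
      using \<open>M1 *v z i = e i\<close> by (rule quadratic_form_le_inverse[OF sym1 psd1])
    ultimately show ?thesis by simp
  qed
  txt \<open>Row \<open>j\<close> of the invertible matrix \<open>M2\<^sup>-\<^sup>1\<close> is nonzero, so some \<open>y i0\<close> has a nonzero \<open>j\<close>-th entry.\<close>
  obtain i0 where "matrix_inv M2 $ j $ i0 \<noteq> 0"
  proof -
    have "(matrix_inv M2 ** M2) $ j $ j = 1"
      by (simp add: matrix_inv_if_pos_definite pd2 mat_def)
    then have "(\<Sum>k\<in>UNIV. matrix_inv M2 $ j $ k * M2 $ k $ j) \<noteq> 0"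
      by (simp add: matrix_matrix_mult_def)
    then show ?thesis
      using that by (metis (no_types, lifting) mult_eq_0_iff sum.neutral)
  qed
  then have "0 < D i0"
    unfolding D_def by (intro pos) (simp add: y_def e_def matrix_vector_mult_basis column_def)
  then have "0 < (\<Sum>i\<in>UNIV. D i)"
    by (intro sum_pos2[of UNIV i0]) (auto simp: D_def psd)
  moreover have "(\<Sum>i\<in>UNIV. e i \<bullet> y i + D i) \<le> (\<Sum>i\<in>UNIV. e i \<bullet> z i)"
    by (intro sum_mono column_le)
  ultimately show ?thesis
    unfolding trace_eq y_def z_def by (simp add: sum.distrib)
qed

theorem lemma1:
  fixes A :: "real^'n^'n" and T \<epsilon> :: real and S1 S2 :: "'n set"
  assumes "T > 0" and "\<epsilon> > 0" and "S1 \<subset> S2"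
  shows "Fobj A T \<epsilon> S2 < Fobj A T \<epsilon> S1"
proof -
  define M where "M = (\<lambda>S. gramian A T S + \<epsilon> *\<^sub>R mat 1)"
  have inner_M: "x \<bullet> (M S *v y) = x \<bullet> (gramian A T S *v y) + \<epsilon> * (x \<bullet> y)" for S x y
    by (simp add: M_def matrix_vector_mult_add_rdistrib inner_add_right scaleR_matrix_vector_assoc[symmetric])
  have M_diff: "M S2 - M S1 = gramian A T S2 - gramian A T S1"
    by (simp add: M_def)
  obtain j where "j \<in> S2 - S1"
    using \<open>S1 \<subset> S2\<close> by blast
  have pos_definite: "0 < x \<bullet> (M S *v x)" if "x \<noteq> 0" for S x
    using inner_gramian_nonneg[of x A T S] that \<open>\<epsilon> > 0\<close> by (simp add: inner_M add_nonneg_pos)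
  have "trace (matrix_inv (M S2)) < trace (matrix_inv (M S1))"
  proof (rule trace_matrix_inv_strict_antimono)
    show "x \<bullet> (M S1 *v y) = y \<bullet> (M S1 *v x)" for x y
      by (simp add: inner_M inner_gramian inner_commute mult.commute)
    show "0 \<le> x \<bullet> ((M S2 - M S1) *v x)" for x
      unfolding M_diff using \<open>S1 \<subset> S2\<close> by (intro inner_gramian_diff_nonneg) auto
    show "0 < x \<bullet> ((M S2 - M S1) *v x)" if "x $ j \<noteq> 0" for x
      unfolding M_diff using assms \<open>j \<in> S2 - S1\<close> that by (intro inner_gramian_diff_pos) auto
  qed (use pos_definite in auto)
  then show ?thesis
    unfolding Fobj_def M_def .
qed

end
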